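(* Every finite solvable group has the $E1$-property.
   Context: For a finite group $G$, a finite-dimensional $\mathbb{R}G$-module $V$ with representation $\rho\colon G\to\mathrm{GL}(V)$, and $n\in\mathrm{GL}(V)$ of finite order normalizing $\rho(G)$, the triple $(G,V,n)$ has the $E1$-property if there is $g\in G$ such that $\rho(g)n$ has eigenvalue $1$. The pair $(G,V)$ has the $E1$-property if $(G,V,n')$ has the $E1$-property for every $n'\in\mathrm{GL}(V)$ of finite order normalizing $\rho(G)$. The group $G$ has the $E1$-property if $(G,V')$ has the $E1$-property for every irreducible, non-trivial $\mathbb{R}G$-module $V'$ of odd dimension. *)

theory Defs
  imports "HOL-Analysis.Analysis" "HOL-Algebra.Solvable_Groups"
begin

definition real_rep :: "('a, 'b) monoid_scheme \<Rightarrow> ('a \<Rightarrow> real^'n^'n) \<Rightarrow> bool" where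
  "real_rep G \<rho> \<longleftrightarrow>
     (\<forall>g\<in>carrier G. invertible (\<rho> g)) \<and>
     (\<forall>g\<in>carrier G. \<forall>h\<in>carrier G. \<rho> (g \<otimes>\<^bsub>G\<^esub> h) = \<rho> g ** \<rho> h)"

text \<open>Irreducible: V is nonzero (automatic, types are nonempty) and the only
  G-invariant subspaces are 0 and V.\<close>
definition irreducible_rep :: "('a, 'b) monoid_scheme \<Rightarrow> ('a \<Rightarrow> real^'n^'n) \<Rightarrow> bool" where
  "irreducible_rep G \<rho> \<longleftrightarrow>
     (\<forall>W::(real^'n) set. subspace W \<and> (\<forall>g\<in>carrier G. (\<lambda>v. \<rho> g *v v) ` W \<subseteq> W)
        \<longrightarrow> W = {0} \<or> W = UNIV)"

definition nontrivial_rep :: "('a, 'b) monoid_scheme \<Rightarrow> ('a \<Rightarrow> real^'n^'n) \<Rightarrow> bool" where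
  "nontrivial_rep G \<rho> \<longleftrightarrow> (\<exists>g\<in>carrier G. \<rho> g \<noteq> mat 1)"

definition finite_order_normalizing ::
  "('a, 'b) monoid_scheme \<Rightarrow> ('a \<Rightarrow> real^'n^'n) \<Rightarrow> real^'n^'n \<Rightarrow> bool" where
  "finite_order_normalizing G \<rho> N \<longleftrightarrow>
     invertible N \<and> (\<exists>k>0. ((\<lambda>A. N ** A) ^^ k) (mat 1) = mat 1) \<and>
     (\<lambda>A. N ** A ** matrix_inv N) ` (\<rho> ` carrier G) = \<rho> ` carrier G"

definition E1_triple :: "('a, 'b) monoid_scheme \<Rightarrow> ('a \<Rightarrow> real^'n^'n) \<Rightarrow> real^'n^'n \<Rightarrow> bool" where
  "E1_triple G \<rho> N \<longleftrightarrow> (\<exists>g\<in>carrier G. \<exists>v. v \<noteq> 0 \<and> (\<rho> g ** N) *v v = v)"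

definition E1_pair :: "('a, 'b) monoid_scheme \<Rightarrow> ('a \<Rightarrow> real^'n^'n) \<Rightarrow> bool" where
  "E1_pair G \<rho> \<longleftrightarrow> (\<forall>N. finite_order_normalizing G \<rho> N \<longrightarrow> E1_triple G \<rho> N)"

end

(*
  Let H = rho(G) and let D be the last nontrivial term of the derived series of H: it is abelian,
  normal in H and normalized by N. In odd dimension commuting matrices of odd order have a common
  fixed vector, whereas by irreducibility D fixes no nonzero vector; so the involutions of D form
  a nontrivial elementary abelian 2-group A. The weight spaces of A add up to the whole odd-
  dimensional space, so some weight s has an eigenspace V of odd dimension, and s is nontrivial.
  Pick h in H such that hN does not map V into the kernel of the projection onto V. Conjugation
  by hN permutes A and preserves s, so hN stabilizes V. For a in A with s a = -1, the matrices
  hN and (ah)N act on V as T and -T, both of finite order. A matrix of finite order without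
  eigenvalue 1 in odd dimension has determinant -1, since det (M - 1) = (-1)^n det M det (M - 1);
  as det (-T) = -det T on the odd-dimensional V, one of hN and (ah)N has eigenvalue 1.
*)

theory Submission
  imports Defs
begin

type_synonym 'n rmat = "real^'n^'n"

section \<open>Matrix algebra\<close>

lemma matrix_add_rdistrib: "((A::'n::finite rmat) + B) ** C = A ** C + B ** C"
  by (simp add: matrix_matrix_mult_def vec_eq_iff sum.distrib algebra_simps)

lemma matrix_diff_ldistrib: "(C::'n::finite rmat) ** (A - B) = C ** A - C ** B"
  by (simp add: matrix_matrix_mult_def vec_eq_iff sum_subtractf algebra_simps)

lemma matrix_diff_rdistrib: "((A::'n::finite rmat) - B) ** C = A ** C - B ** C"
  by (simp add: matrix_matrix_mult_def vec_eq_iff sum_subtractf algebra_simps)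

lemma matrix_mul_uminus_left: "(- A::'n::finite rmat) ** C = - (A ** C)"
  by (simp add: matrix_matrix_mult_def vec_eq_iff sum_negf)

lemma matrix_mul_uminus_right: "(C::'n::finite rmat) ** (- A) = - (C ** A)"
  by (simp add: matrix_matrix_mult_def vec_eq_iff sum_negf)

lemma matrix_mul_scaleR_left: "(c *\<^sub>R A::'n::finite rmat) ** C = c *\<^sub>R (A ** C)"
  by (simp add: scalar_matrix_assoc)

lemma matrix_mul_scaleR_right: "(C::'n::finite rmat) ** (c *\<^sub>R A) = c *\<^sub>R (C ** A)"
  by (simp add: matrix_scalar_ac scalar_matrix_assoc)

lemma matrix_mul_sum_left: "(sum f S :: 'n::finite rmat) ** C = (\<Sum>x\<in>S. f x ** C)"
  by (induction S rule: infinite_finite_induct) (auto simp: matrix_add_rdistrib)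

lemma matrix_mul_sum_right: "(C::'n::finite rmat) ** sum f S = (\<Sum>x\<in>S. C ** f x)"
  by (induction S rule: infinite_finite_induct) (auto simp: matrix_add_ldistrib)

lemmas matrix_ring_simps = matrix_add_ldistrib matrix_add_rdistrib matrix_diff_ldistrib
  matrix_diff_rdistrib matrix_mul_uminus_left matrix_mul_uminus_right matrix_mul_scaleR_left
  matrix_mul_scaleR_right matrix_mul_assoc

lemma matrix_mul_left_commute:
  "(y::'n::finite rmat) ** P = P ** y \<Longrightarrow> y ** (P ** Q) = P ** (y ** Q)"
  by (simp add: matrix_mul_assoc)

lemma matrix_mul_commute_mult:
  "(y::'n::finite rmat) ** P = P ** y \<Longrightarrow> y ** Q = Q ** y \<Longrightarrow> y ** (P ** Q) = P ** Q ** y"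
  by (simp add: matrix_mul_left_commute flip: matrix_mul_assoc)

lemma matrix_vector_mult_sum_left: "(sum f S :: 'n::finite rmat) *v x = (\<Sum>i\<in>S. f i *v x)"
  by (induction S rule: infinite_finite_induct) (auto simp: matrix_vector_mult_add_rdistrib)

lemma matrix_vector_mult_scaleR_left: "(c *\<^sub>R (A::'n::finite rmat)) *v v = c *\<^sub>R (A *v v)"
  by (simp add: matrix_vector_mult_def vec_eq_iff sum_distrib_left algebra_simps)

lemma det_uminus: "det (- A :: 'n::finite rmat) = (-1) ^ CARD('n) * det A"
proof -
  have "- A = (\<chi> i. (-1) *s (\<chi> i. A $ i) $ i)"
    by (simp add: vec_eq_iff)
  then show ?thesis
    using det_rows_mul[of "\<lambda>i. -1" "\<lambda>i. A $ i"] by (simp add: vec_lambda_eta)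
qed

lemma det_uminus_odd: "odd CARD('n::finite) \<Longrightarrow> det (- A :: 'n rmat) = - det A"
  by (simp add: det_uminus)

lemma det_eq_0_imp_kernel: "det (A::'n::finite rmat) = 0 \<Longrightarrow> \<exists>v. v \<noteq> 0 \<and> A *v v = 0"
  by (metis invertible_det_nz invertible_left_inverse matrix_left_invertible_ker)

lemma matrix_inv_cancel:
  assumes "invertible (A::'n::finite rmat)"
  shows matrix_inv_right: "A ** matrix_inv A = mat 1"
    and matrix_inv_left: "matrix_inv A ** A = mat 1"
  using someI_ex[OF assms[unfolded invertible_def]] by (simp_all add: matrix_inv_def)

lemma matrix_inv_unique:
  assumes "(A::'n::finite rmat) ** B = mat 1"
  shows "matrix_inv A = B"
proof -
  have "matrix_inv A ** A = mat 1"
    using assms invertible_right_inverse matrix_inv_left by blast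
  then have "matrix_inv A ** (A ** B) = B"
    by (simp add: matrix_mul_assoc)
  with assms show ?thesis
    by simp
qed

lemma matrix_inv_matrix_inv: "invertible (A::'n::finite rmat) \<Longrightarrow> matrix_inv (matrix_inv A) = A"
  by (simp add: matrix_inv_left matrix_inv_unique)

lemma matrix_inv_mult:
  assumes "invertible (A::'n::finite rmat)" and "invertible (B::'n rmat)"
  shows "matrix_inv (A ** B) = matrix_inv B ** matrix_inv A"
  by (rule matrix_inv_unique)
    (metis assms matrix_inv_right matrix_mul_assoc matrix_mul_rid)

lemma matrix_mul_inv_cancel:
  assumes "invertible (h::'n::finite rmat)"
  shows "X ** h ** matrix_inv h = X" and "X ** matrix_inv h ** h = X"
  using assms by (simp_all add: matrix_inv_left matrix_inv_right flip: matrix_mul_assoc)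

lemma commute_if_commutator_eq_1:
  fixes x y :: "'n::finite rmat"
  assumes "invertible x" "invertible y" "x ** y ** matrix_inv x ** matrix_inv y = mat 1"
  shows "x ** y = y ** x"
proof -
  have "x ** y ** matrix_inv x = y"
    using assms(3) matrix_mul_inv_cancel(2)[OF assms(2), of "x ** y ** matrix_inv x"] by simp
  then show ?thesis
    using matrix_mul_inv_cancel(2)[OF assms(1), of "x ** y"] by simp
qed

section \<open>Powers and matrices of finite order\<close>

definition matpow :: "'n::finite rmat \<Rightarrow> nat \<Rightarrow> 'n rmat" where
  "matpow A k = ((\<lambda>B. A ** B) ^^ k) (mat 1)"

lemma matpow_0 [simp]: "matpow A 0 = mat 1"
  by (simp add: matpow_def)

lemma matpow_Suc: "matpow A (Suc k) = A ** matpow A k"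
  by (simp add: matpow_def)

lemma matpow_add: "matpow A (j + k) = matpow A j ** matpow A k"
  by (induction j) (auto simp: matpow_Suc matrix_mul_assoc)

lemma matpow_Suc_right: "matpow A (Suc k) = matpow A k ** A"
  using matpow_add[of A k 1] by (simp add: matpow_Suc)

lemma matpow_mult: "matpow A (j * k) = matpow (matpow A j) k"
  by (induction k) (auto simp: matpow_Suc matpow_add)

lemma matpow_mat_1 [simp]: "matpow (mat 1) j = mat 1"
  by (induction j) (auto simp: matpow_Suc)

lemma det_matpow: "det (matpow A k) = det A ^ k"
  by (induction k) (auto simp: matpow_Suc det_mul)

lemma invertible_mat_1: "invertible (mat 1 :: 'n::finite rmat)"
  unfolding invertible_def by (intro exI[of _ "mat 1"]) simp

lemma invertible_matpow: "invertible (A::'n::finite rmat) \<Longrightarrow> invertible (matpow A k)"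
  by (induction k) (auto simp: matpow_Suc invertible_mult invertible_mat_1)

lemma matpow_commute: "(A::'n::finite rmat) ** B = B ** A \<Longrightarrow> matpow A k ** B = B ** matpow A k"
  by (induction k) (auto simp: matpow_Suc, metis matrix_mul_assoc)

lemma matpow_fixed_vector: "A *v v = v \<Longrightarrow> matpow A k *v v = v"
  by (induction k) (auto simp: matpow_Suc_right simp flip: matrix_vector_mul_assoc)

lemma finite_order_if_closed:
  fixes M :: "'n::finite rmat"
  assumes "finite S" and "invertible M" and "\<And>X. X \<in> S \<Longrightarrow> M ** X \<in> S" and "mat 1 \<in> S"
  shows "\<exists>k>0. matpow M k = mat 1"
proof -
  have "matpow M i \<in> S" for i
    using assms(3,4) by (induction i) (auto simp: matpow_Suc)
  then have "range (matpow M) \<subseteq> S"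
    by auto
  then have "finite (range (matpow M))"
    using assms(1) finite_subset by blast
  then have "\<not> inj (matpow M)"
    using finite_imageD by fastforce
  then obtain i j where ij: "i < j" "matpow M i = matpow M j"
    unfolding inj_def by (metis linorder_neqE_nat)
  have "matpow M j = matpow M i ** matpow M (j - i)"
    using ij(1) by (simp flip: matpow_add)
  then have "matrix_inv (matpow M i) ** matpow M i =
      matrix_inv (matpow M i) ** (matpow M i ** matpow M (j - i))"
    using ij(2) by simp
  then have "matpow M (j - i) = mat 1"
    using invertible_matpow[OF assms(2)] by (simp add: matrix_mul_assoc matrix_inv_left)
  with ij(1) show ?thesis
    by (intro exI[of _ "j - i"]) simp
qed

lemma finite_range_matpow:
  assumes "matpow N k = mat 1" and "k > 0"
  shows "finite (range (matpow N))"
proof -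
  have "matpow N j = matpow N (j mod k)" for j
  proof -
    have "matpow N j = matpow N (k * (j div k)) ** matpow N (j mod k)"
      by (simp flip: matpow_add)
    then show ?thesis
      using assms(1) by (simp add: matpow_mult)
  qed
  then have "range (matpow N) \<subseteq> matpow N ` {..<k}"
    using assms(2) by (metis image_eqI image_subsetI lessThan_iff mod_less_divisor)
  then show ?thesis
    by (rule finite_subset) simp
qed

lemma sum_lessThan_rotate:
  "f k = f 0 \<Longrightarrow> (\<Sum>j<k. f (Suc j)) = (\<Sum>j<k. f j :: 'a::cancel_comm_monoid_add)"
proof -
  assume "f k = f 0"
  then have "f 0 + (\<Sum>j<k. f (Suc j)) = f 0 + (\<Sum>j<k. f j)"
    by (metis add.commute sum.lessThan_Suc sum.lessThan_Suc_shift)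
  then show ?thesis
    by simp
qed

lemma transpose_diff: "transpose ((A::'n::finite rmat) - B) = transpose A - transpose B"
  by (simp add: transpose_def vec_eq_iff)

lemma inner_transpose_mult_self:
  "x \<bullet> (transpose B *v (B *v x)) = (B *v x) \<bullet> (B *v (x::real^'n::finite))"
  by (metis dot_lmul_matrix inner_commute transpose_matrix_vector)

lemma finite_order_invariant_form:
  fixes M :: "'n::finite rmat"
  assumes "matpow M k = mat 1" and "k > 0"
  obtains S where "det S \<noteq> 0" and "transpose M ** S ** M = S"
proof -
  define f where "f j = transpose (matpow M j) ** matpow M j" for j
  define S where "S = (\<Sum>j<k. f j)"
  have "transpose M ** S ** M = (\<Sum>j<k. f (Suc j))"
    unfolding S_def f_def
    by (simp add: matrix_mul_sum_left matrix_mul_sum_right matpow_Suc_right matrix_transpose_mul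
        matrix_mul_assoc)
  also have "\<dots> = S"
    unfolding S_def using assms(1) by (intro sum_lessThan_rotate) (simp add: f_def)
  finally have invariant: "transpose M ** S ** M = S" .
  have "x = 0" if "S *v x = 0" for x
  proof -
    have "x \<bullet> (S *v x) = (\<Sum>j<k. (matpow M j *v x) \<bullet> (matpow M j *v x))"
      unfolding S_def f_def
      by (simp add: matrix_vector_mult_sum_left inner_sum_right inner_transpose_mult_self[symmetric]
          flip: matrix_vector_mul_assoc)
    with that have "(\<Sum>j<k. (matpow M j *v x) \<bullet> (matpow M j *v x)) = 0"
      by simp
    then have "\<forall>j\<in>{..<k}. (matpow M j *v x) \<bullet> (matpow M j *v x) = 0"
      by (subst (asm) sum_nonneg_eq_0_iff) auto
    then show "x = 0"
      using assms(2) by (metis inner_eq_zero_iff lessThan_iff matrix_vector_mul_lid matpow_0)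
  qed
  then have "det S \<noteq> 0"
    using det_eq_0_imp_kernel by blast
  with invariant show thesis
    using that by blast
qed

text \<open>M preserves the positive definite form S, so the inverse of M is conjugate to
  transpose M, and det (M - 1) = det M * det (1 - transpose M).\<close>
lemma det_diff_mat_1_finite_order:
  fixes M :: "'n::finite rmat"
  assumes "matpow M k = mat 1" and "k > 0"
  shows "det (M - mat 1) = (-1) ^ CARD('n) * det M * det (M - mat 1)"
proof -
  obtain S where S: "det S \<noteq> 0" "transpose M ** S ** M = S"
    using finite_order_invariant_form[OF assms] .
  have "det S * det (M - mat 1) = det (S ** M - S)"
    by (simp add: det_mul[symmetric] matrix_ring_simps)
  also have "S ** M - S = (mat 1 - transpose M) ** S ** M"
    by (simp add: matrix_ring_simps S(2))
  also have "det \<dots> = det (mat 1 - M) * det S * det M"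
    by (simp add: det_mul det_transpose[symmetric, of "mat 1 - M"] transpose_diff)
  finally have "det S * det (M - mat 1) = det (mat 1 - M) * det S * det M" .
  moreover have "det (mat 1 - M) = (-1) ^ CARD('n) * det (M - mat 1)"
    by (metis det_uminus minus_diff_eq)
  ultimately show ?thesis
    using S(1) by (simp add: algebra_simps)
qed

lemma det_eq_minus_1_if_no_fixed_vector:
  fixes M :: "'n::finite rmat"
  assumes "odd CARD('n)" and "matpow M k = mat 1" and "k > 0"
    and "\<And>v. M *v v = v \<Longrightarrow> v = 0"
  shows "det M = -1"
proof -
  have "det (M - mat 1) \<noteq> 0"
    using det_eq_0_imp_kernel[of "M - mat 1"] assms(4)
    by (auto simp: matrix_vector_mult_diff_rdistrib)
  moreover have "det (M - mat 1) * (1 + det M) = 0"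
    using det_diff_mat_1_finite_order[OF assms(2,3)] assms(1) by (simp add: algebra_simps)
  ultimately show ?thesis
    by simp
qed

lemma odd_power_eq_1: "odd q \<Longrightarrow> (t::real) ^ q = 1 \<Longrightarrow> t = 1"
  by (metis linorder_le_cases linorder_neqE not_one_le_zero odd_pos
    one_less_power order_less_irrefl power_less_one_iff zero_le_odd_power)

section \<open>Projections of odd rank\<close>

text \<open>mat 1 - 2P is the reflection in the kernel of the projection P, so its determinant is
  (-1) ^ rank P: an odd projection is a projection of odd rank.\<close>
definition odd_projection :: "'n::finite rmat \<Rightarrow> bool" where
  "odd_projection P \<longleftrightarrow> P ** P = P \<and> det (mat 1 - 2 *\<^sub>R P) = -1"

lemma idempotent_mult_commuting:
  fixes P Q :: "'n::finite rmat"
  assumes "P ** P = P" and "Q ** Q = Q" and "P ** Q = Q ** P"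
  shows "P ** Q ** (P ** Q) = P ** Q"
  by (metis assms matrix_mul_assoc)

lemma reflection_mult_orthogonal:
  fixes Q R :: "'n::finite rmat"
  assumes "Q ** R = 0"
  shows "(mat 1 - 2 *\<^sub>R Q) ** (mat 1 - 2 *\<^sub>R R) = mat 1 - 2 *\<^sub>R (Q + R)"
  using assms by (simp add: matrix_ring_simps algebra_simps)

lemma det_reflection_add:
  fixes Q R :: "'n::finite rmat"
  assumes "Q ** R = 0"
  shows "det (mat 1 - 2 *\<^sub>R (Q + R)) = det (mat 1 - 2 *\<^sub>R Q) * det (mat 1 - 2 *\<^sub>R R)"
  by (metis assms det_mul reflection_mult_orthogonal)

lemma det_reflection_cases:
  fixes P :: "'n::finite rmat"
  assumes "P ** P = P"
  shows "det (mat 1 - 2 *\<^sub>R P) = 1 \<or> det (mat 1 - 2 *\<^sub>R P) = -1"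
proof -
  have "(mat 1 - 2 *\<^sub>R P) ** (mat 1 - 2 *\<^sub>R P) = (mat 1 - 2 *\<^sub>R P) - 2 *\<^sub>R (P - 2 *\<^sub>R P)"
    using assms by (simp only: matrix_diff_ldistrib matrix_diff_rdistrib matrix_mul_scaleR_left
        matrix_mul_scaleR_right matrix_mul_lid matrix_mul_rid)
  also have "\<dots> = mat 1"
    by (simp add: scaleR_2)
  finally have "det (mat 1 - 2 *\<^sub>R P) * det (mat 1 - 2 *\<^sub>R P) = 1"
    by (metis det_I det_mul)
  then show ?thesis
    by (simp add: square_eq_1_iff)
qed

lemma odd_projection_mat_1: "odd CARD('n::finite) \<Longrightarrow> odd_projection (mat 1 :: 'n rmat)"
  using det_uminus_odd[of "mat 1 :: 'n rmat"] by (simp add: odd_projection_def scaleR_2)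

lemma odd_projection_nonzero:
  assumes "odd_projection (P::'n::finite rmat)"
  shows "\<exists>w. P *v w \<noteq> 0"
proof (rule ccontr)
  assume "\<not> ?thesis"
  then have "P = 0"
    by (simp add: matrix_eq)
  with assms show False
    by (simp add: odd_projection_def)
qed

text \<open>When P is a projection commuting with T, this matrix acts as T on the range of P and as
  multiplication by c on its kernel.\<close>
definition block_extend :: "'n::finite rmat \<Rightarrow> 'n rmat \<Rightarrow> real \<Rightarrow> 'n rmat" where
  "block_extend P T c = T ** P + c *\<^sub>R (mat 1 - P)"

lemma matpow_block_extend:
  fixes T P :: "'n::finite rmat"
  assumes PP: "P ** P = P" and TP: "T ** P = P ** T"
  shows "matpow (block_extend P T c) j = matpow T j ** P + (c ^ j) *\<^sub>R (mat 1 - P)"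
proof (induction j)
  case 0
  then show ?case by (simp add: block_extend_def)
next
  case (Suc j)
  have comm: "matpow T j ** P = P ** matpow T j"
    by (rule matpow_commute[OF TP])
  have PP': "X ** P ** P = X ** P" for X
    by (metis PP matrix_mul_assoc)
  have "T ** P ** (matpow T j ** P) = matpow T (Suc j) ** P"
    by (metis PP comm matrix_mul_assoc matpow_Suc)
  moreover have "T ** P ** (mat 1 - P) = 0"
    by (simp add: matrix_ring_simps PP PP')
  moreover have "(mat 1 - P) ** (matpow T j ** P) = 0"
    by (simp add: matrix_ring_simps PP comm flip: matrix_mul_assoc) (simp add: matrix_mul_assoc PP)
  moreover have "(mat 1 - P) ** (mat 1 - P) = mat 1 - P"
    by (simp add: matrix_ring_simps PP)
  ultimately show ?case
    using Suc by (simp add: block_extend_def matpow_Suc matrix_add_ldistrib matrix_add_rdistrib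
        matrix_mul_scaleR_left matrix_mul_scaleR_right mult.commute)
qed

lemma matpow_block_extend_eq_1:
  fixes T P :: "'n::finite rmat"
  assumes "P ** P = P" and "T ** P = P ** T" and "matpow T k = mat 1" and "c ^ k = 1"
  shows "matpow (block_extend P T c) k = mat 1"
  using assms by (simp add: matpow_block_extend)

lemma block_extend_fixed_vector:
  fixes T P :: "'n::finite rmat"
  assumes PP: "P ** P = P" and TP: "T ** P = P ** T"
    and v: "block_extend P T (-1) *v v = v"
  shows "T *v v = v" and "P *v v = v"
proof -
  have PP': "X ** P ** P = X ** P" for X
    by (metis PP matrix_mul_assoc)
  have "P ** T ** P = T ** P"
    by (metis PP TP matrix_mul_assoc)
  then have "P ** block_extend P T (-1) = T ** P"
    by (simp add: block_extend_def matrix_ring_simps PP)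
  then have Pv: "P *v v = T *v (P *v v)"
    by (metis v matrix_vector_mul_assoc)
  have "(mat 1 - P) ** block_extend P T (-1) = - (mat 1 - P)"
    by (simp add: block_extend_def matrix_ring_simps PP PP' flip: TP)
  then have "(mat 1 - P) *v v = - ((mat 1 - P) *v v)"
    by (metis v matrix_vector_mul_assoc matrix_vector_mult_diff_rdistrib matrix_vector_mul_lid
        minus_diff_eq)
  then show "P *v v = v"
    by (simp add: vec_eq_iff matrix_vector_mult_diff_rdistrib)
  with Pv show "T *v v = v"
    by simp
qed

lemma det_block_extend_no_fixed_vector:
  fixes T P :: "'n::finite rmat"
  assumes "odd CARD('n)" and "P ** P = P" and "T ** P = P ** T"
    and "matpow T k = mat 1" and "k > 0"
    and "\<And>v. T *v v = v \<Longrightarrow> P *v v = v \<Longrightarrow> v = 0"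
  shows "det (block_extend P T (-1)) = -1"
proof (rule det_eq_minus_1_if_no_fixed_vector[OF assms(1)])
  have "matpow T (k * 2) = mat 1"
    by (simp add: matpow_mult assms(4))
  moreover have "(-1::real) ^ (k * 2) = 1"
    by (simp add: mult.commute[of k 2] power_mult)
  ultimately show "matpow (block_extend P T (-1)) (k * 2) = mat 1"
    using assms(2,3) by (rule_tac matpow_block_extend_eq_1)
  show "k * 2 > 0"
    using assms(5) by simp
  show "v = 0" if "block_extend P T (-1) *v v = v" for v
    using assms(2,3,6) block_extend_fixed_vector that by blast
qed

lemma block_extend_mult_reflection:
  fixes T P :: "'n::finite rmat"
  assumes "P ** P = P"
  shows "block_extend P T c ** (mat 1 - 2 *\<^sub>R P) = - block_extend P T (- c)"
proof -
  have "T ** P ** P = T ** P"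
    by (metis assms matrix_mul_assoc)
  moreover have "(mat 1 - P) ** P = 0"
    by (simp add: matrix_diff_rdistrib assms)
  ultimately have "block_extend P T c ** P = T ** P"
    by (simp add: block_extend_def matrix_add_rdistrib matrix_mul_scaleR_left)
  then have "block_extend P T c ** (mat 1 - 2 *\<^sub>R P) = block_extend P T c - 2 *\<^sub>R (T ** P)"
    by (simp add: matrix_diff_ldistrib matrix_mul_scaleR_right)
  also have "\<dots> = - block_extend P T (- c)"
  proof -
    have "(x + y) - 2 *\<^sub>R x = - (x + - y)" for x y :: "'n rmat"
      by (simp add: scaleR_2)
    then show ?thesis
      unfolding block_extend_def by simp
  qed
  finally show ?thesis .
qed

section \<open>Eigenprojections\<close>

definition cyclic_mean :: "'n::finite rmat \<Rightarrow> nat \<Rightarrow> 'n rmat" where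
  "cyclic_mean x q = (1 / real q) *\<^sub>R (\<Sum>j<q. matpow x j)"

lemma cyclic_mean_commute:
  "(y::'n::finite rmat) ** x = x ** y \<Longrightarrow> y ** cyclic_mean x q = cyclic_mean x q ** y"
  unfolding cyclic_mean_def
  by (simp add: matrix_mul_scaleR_left matrix_mul_scaleR_right matrix_mul_sum_left
      matrix_mul_sum_right matpow_commute)

context
  fixes x :: "'n::finite rmat" and q :: nat
  assumes order: "matpow x q = mat 1" and q_pos: "q > 0"
begin

lemma cyclic_mean_absorb_left: "x ** cyclic_mean x q = cyclic_mean x q"
  unfolding cyclic_mean_def using sum_lessThan_rotate[of "matpow x" q] order
  by (simp add: matrix_mul_scaleR_right matrix_mul_sum_right flip: matpow_Suc)

lemma cyclic_mean_absorb_right: "cyclic_mean x q ** x = cyclic_mean x q"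
  unfolding cyclic_mean_def using sum_lessThan_rotate[of "matpow x" q] order
  by (simp add: matrix_mul_scaleR_left matrix_mul_sum_left flip: matpow_Suc_right)

lemma cyclic_mean_idempotent: "cyclic_mean x q ** cyclic_mean x q = cyclic_mean x q"
proof -
  have "cyclic_mean x q ** matpow x j = cyclic_mean x q" for j
    by (induction j) (auto simp: matpow_Suc_right matrix_mul_assoc cyclic_mean_absorb_right)
  then show ?thesis
    using q_pos by (subst (2) cyclic_mean_def)
      (simp add: matrix_mul_scaleR_right matrix_mul_sum_right sum_constant_scaleR del: sum_constant)
qed

lemma cyclic_mean_fixed_vector: "x *v v = v \<Longrightarrow> cyclic_mean x q *v v = v"
  using q_pos
  by (simp add: cyclic_mean_def matrix_vector_mult_scaleR_left matrix_vector_mult_sum_left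
      matpow_fixed_vector sum_constant_scaleR del: sum_constant)

end

definition involution_proj :: "'n::finite rmat \<Rightarrow> real \<Rightarrow> 'n rmat" where
  "involution_proj a e = (1/2) *\<^sub>R (mat 1 + e *\<^sub>R a)"

lemma involution_proj_commute:
  "(b::'n::finite rmat) ** a = a ** b \<Longrightarrow> b ** involution_proj a e = involution_proj a e ** b"
  by (simp add: involution_proj_def matrix_ring_simps)

lemma involution_proj_sum: "involution_proj (a::'n::finite rmat) 1 + involution_proj a (-1) = mat 1"
  by (simp add: involution_proj_def algebra_simps scaleR_2[symmetric])

lemma involution_proj_orthogonal:
  "(a::'n::finite rmat) ** a = mat 1 \<Longrightarrow> involution_proj a 1 ** involution_proj a (-1) = 0"
  by (simp add: involution_proj_def matrix_ring_simps algebra_simps)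

context
  fixes a :: "'n::finite rmat" and e :: real
  assumes involution: "a ** a = mat 1" and sign: "e = 1 \<or> e = -1"
begin

lemma involution_proj_absorb_left: "a ** involution_proj a e = e *\<^sub>R involution_proj a e"
  using sign by (auto simp: involution_proj_def matrix_ring_simps involution algebra_simps)

lemma involution_proj_absorb_right: "involution_proj a e ** a = e *\<^sub>R involution_proj a e"
  using sign by (auto simp: involution_proj_def matrix_ring_simps involution algebra_simps)

lemma involution_proj_idempotent: "involution_proj a e ** involution_proj a e = involution_proj a e"
proof -
  have "involution_proj a e ** involution_proj a e =
      (1/2) *\<^sub>R (involution_proj a e + e *\<^sub>R (involution_proj a e ** a))"
    by (subst (2) involution_proj_def) (simp add: matrix_ring_simps)
  also have "\<dots> = (1/2) *\<^sub>R ((1 + e * e) *\<^sub>R involution_proj a e)"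
    by (simp add: involution_proj_absorb_right algebra_simps)
  finally show ?thesis
    using sign by (auto simp: scaleR_2[symmetric])
qed

lemma involution_proj_fixed_vector: "a *v v = e *\<^sub>R v \<Longrightarrow> involution_proj a e *v v = v"
  using sign
  by (auto simp: involution_proj_def matrix_vector_mult_scaleR_left
      matrix_vector_mult_add_rdistrib scaleR_2[symmetric])

end

lemma odd_projection_mult_involution_proj:
  fixes a P :: "'n::finite rmat"
  assumes P: "odd_projection P" and involution: "a ** a = mat 1" and aP: "a ** P = P ** a"
  shows "\<exists>e. (e = 1 \<or> e = -1) \<and> odd_projection (P ** involution_proj a e)"
proof -
  let ?Q = "\<lambda>e. P ** involution_proj a e"
  have PP: "P ** P = P"
    using P by (simp add: odd_projection_def)
  have comm: "P ** involution_proj a e = involution_proj a e ** P" for e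
    by (rule involution_proj_commute[OF aP[symmetric]])
  have idem: "?Q e ** ?Q e = ?Q e" if "e = 1 \<or> e = -1" for e
    using idempotent_mult_commuting[OF PP involution_proj_idempotent[OF involution that] comm] .
  have "?Q 1 ** ?Q (-1) = P ** P ** (involution_proj a 1 ** involution_proj a (-1))"
    by (metis comm matrix_mul_assoc)
  then have orth: "?Q 1 ** ?Q (-1) = 0"
    by (simp add: involution_proj_orthogonal[OF involution])
  have "?Q 1 + ?Q (-1) = P"
    by (simp flip: matrix_add_ldistrib add: involution_proj_sum)
  then have "det (mat 1 - 2 *\<^sub>R ?Q 1) * det (mat 1 - 2 *\<^sub>R ?Q (-1)) = -1"
    using det_reflection_add[OF orth] P by (simp add: odd_projection_def)
  moreover note det_reflection_cases[OF idem[of 1]] det_reflection_cases[OF idem[of "-1"]]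
  ultimately have "det (mat 1 - 2 *\<^sub>R ?Q 1) = -1 \<or> det (mat 1 - 2 *\<^sub>R ?Q (-1)) = -1"
    by auto
  then show ?thesis
    using idem[of 1] idem[of "-1"] unfolding odd_projection_def by auto
qed

section \<open>Common eigenvectors in odd dimension\<close>

text \<open>block_extend R x (-1) fixes no nonzero vector and so has determinant -1, while
  block_extend R x 1 has odd order and so has determinant 1; the two differ by the reflection
  mat 1 - 2R up to sign.\<close>
lemma det_reflection_eq_1_if_odd_order:
  fixes x R :: "'n::finite rmat"
  assumes odd: "odd CARD('n)" and RR: "R ** R = R" and xR: "x ** R = R ** x"
    and q: "odd q" and order: "matpow x q = mat 1"
    and no_fixed: "\<And>v. x *v v = v \<Longrightarrow> R *v v = v \<Longrightarrow> v = 0"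
  shows "det (mat 1 - 2 *\<^sub>R R) = 1"
proof -
  have "det (block_extend R x (-1)) = -1"
    using det_block_extend_no_fixed_vector[OF odd RR xR order odd_pos[OF q] no_fixed] .
  moreover have "det (block_extend R x 1) = 1"
  proof -
    have "det (block_extend R x 1) ^ q = 1"
      using matpow_block_extend_eq_1[OF RR xR order, of 1] by (metis det_I det_matpow power_one)
    then show ?thesis
      using q odd_power_eq_1 by blast
  qed
  moreover have "block_extend R x 1 ** (mat 1 - 2 *\<^sub>R R) = - block_extend R x (-1)"
    using block_extend_mult_reflection[OF RR, of x 1] by simp
  then have "det (block_extend R x 1) * det (mat 1 - 2 *\<^sub>R R) = - det (block_extend R x (-1))"
    by (metis det_mul det_uminus_odd[OF odd])
  ultimately show ?thesis
    by simp
qed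

text \<open>P splits into P ** Q, with Q the projection onto the fixed space of x, and a complement
  R on whose range x fixes no vector; R has even rank, so P ** Q has odd rank.\<close>
lemma odd_projection_mult_cyclic_mean:
  fixes x P :: "'n::finite rmat"
  assumes odd: "odd CARD('n)" and P: "odd_projection P" and xP: "x ** P = P ** x"
    and q: "odd q" and order: "matpow x q = mat 1"
  shows "odd_projection (P ** cyclic_mean x q)"
proof -
  have q_pos: "q > 0"
    using q by (rule odd_pos)
  define Q where "Q = cyclic_mean x q"
  have PP: "P ** P = P"
    using P by (simp add: odd_projection_def)
  have QQ: "Q ** Q = Q"
    unfolding Q_def by (rule cyclic_mean_idempotent[OF order q_pos])
  have PQ: "P ** Q = Q ** P"
    unfolding Q_def by (rule cyclic_mean_commute[OF xP[symmetric]])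
  have xQ: "x ** Q = Q ** x"
    unfolding Q_def using cyclic_mean_absorb_left[OF order q_pos]
      cyclic_mean_absorb_right[OF order q_pos] by simp
  have PQP: "P ** Q ** P = P ** Q"
    by (metis PQ PP matrix_mul_assoc)
  have PQQ: "P ** Q ** Q = P ** Q"
    by (metis QQ matrix_mul_assoc)
  have PQPQ: "P ** Q ** P ** Q = P ** Q"
    by (metis PQP PQQ matrix_mul_assoc)
  define R where "R = P - P ** Q"
  have RR: "R ** R = R"
    unfolding R_def by (simp add: matrix_ring_simps PP PQP PQQ PQPQ)
  have xR: "x ** R = R ** x"
    unfolding R_def by (simp add: matrix_ring_simps xP) (metis xP xQ matrix_mul_assoc)
  have QR: "Q ** R = 0"
    unfolding R_def by (simp add: matrix_ring_simps flip: PQ) (metis PQQ PQ QQ matrix_mul_assoc)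
  have "det (mat 1 - 2 *\<^sub>R R) = 1"
  proof (rule det_reflection_eq_1_if_odd_order[OF odd RR xR q order])
    fix v
    assume "x *v v = v" and Rv: "R *v v = v"
    then have "Q *v v = v"
      using cyclic_mean_fixed_vector[OF order q_pos] by (simp add: Q_def)
    moreover have "Q *v v = 0"
      by (metis Rv QR matrix_vector_mul_assoc matrix_vector_mult_0)
    ultimately show "v = 0"
      by simp
  qed
  moreover have "R ** (P ** Q) = 0"
    unfolding R_def by (simp add: matrix_ring_simps PP PQPQ)
  moreover have "R + P ** Q = P"
    by (simp add: R_def)
  ultimately have "det (mat 1 - 2 *\<^sub>R (P ** Q)) = -1"
    using det_reflection_add[of R "P ** Q"] P by (simp add: odd_projection_def)
  moreover have "P ** Q ** (P ** Q) = P ** Q"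
    by (rule idempotent_mult_commuting[OF PP QQ PQ])
  ultimately show ?thesis
    unfolding odd_projection_def Q_def by simp
qed

lemma common_fixed_vector_odd_order:
  fixes D :: "'n::finite rmat set"
  assumes odd: "odd CARD('n)" and "finite D"
    and comm: "\<And>x y. x \<in> D \<Longrightarrow> y \<in> D \<Longrightarrow> x ** y = y ** x"
    and odd_order: "\<And>x. x \<in> D \<Longrightarrow> \<exists>q. odd q \<and> matpow x q = mat 1"
  shows "\<exists>v. v \<noteq> 0 \<and> (\<forall>x\<in>D. x *v v = v)"
proof -
  have "\<exists>P. odd_projection P \<and> (\<forall>y\<in>D. y ** P = P ** y) \<and> (\<forall>x\<in>F. x ** P = P)"
    if "F \<subseteq> D" for F
    using finite_subset[OF that assms(2)] that
  proof (induction F rule: finite_induct)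
    case empty
    show ?case
      using odd_projection_mat_1[OF odd] by (intro exI[of _ "mat 1"]) auto
  next
    case (insert x F)
    then obtain P where P: "odd_projection P" "\<forall>y\<in>D. y ** P = P ** y" "\<forall>z\<in>F. z ** P = P"
      by auto
    have xD: "x \<in> D"
      using insert.prems by auto
    obtain q where q: "odd q" "matpow x q = mat 1"
      using odd_order[OF xD] by blast
    have q_pos: "q > 0"
      using q(1) by (rule odd_pos)
    define Q where "Q = cyclic_mean x q"
    have "odd_projection (P ** Q)"
      unfolding Q_def using odd_projection_mult_cyclic_mean[OF odd P(1) _ q] P(2) xD by simp
    moreover have "\<forall>y\<in>D. y ** (P ** Q) = P ** Q ** y"
      using P(2) cyclic_mean_commute[OF comm[OF _ xD]] matrix_mul_commute_mult
      unfolding Q_def by blast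
    moreover have "x ** (P ** Q) = P ** Q"
    proof -
      have "x ** (P ** Q) = P ** (x ** Q)"
        using P(2) xD by (intro matrix_mul_left_commute) auto
      then show ?thesis
        using cyclic_mean_absorb_left[OF q(2) q_pos] by (simp add: Q_def)
    qed
    moreover have "\<forall>z\<in>F. z ** (P ** Q) = P ** Q"
      using P(3) by (simp add: matrix_mul_assoc)
    ultimately show ?case
      by auto
  qed
  then obtain P where P: "odd_projection P" "\<forall>x\<in>D. x ** P = P"
    by blast
  obtain w where "P *v w \<noteq> 0"
    using odd_projection_nonzero[OF P(1)] by blast
  moreover have "\<forall>x\<in>D. x *v (P *v w) = P *v w"
    using P(2) by (simp add: matrix_vector_mul_assoc)
  ultimately show ?thesis
    by blast
qed

text \<open>P is an A-equivariant projection onto the common eigenspace of A on which each a acts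
  by the scalar s a, which is 1 or -1.\<close>
definition weight_projection :: "'n::finite rmat set \<Rightarrow> ('n rmat \<Rightarrow> real) \<Rightarrow> 'n rmat \<Rightarrow> bool"
  where "weight_projection A s P \<longleftrightarrow>
    (\<forall>a\<in>A. (s a = 1 \<or> s a = -1) \<and> a ** P = s a *\<^sub>R P \<and> P ** a = s a *\<^sub>R P) \<and>
    (\<forall>v. (\<forall>a\<in>A. a *v v = s a *\<^sub>R v) \<longrightarrow> P *v v = v)"

lemma weight_projection_empty: "weight_projection {} s (mat 1)"
  by (simp add: weight_projection_def)

lemma weight_projection_insert:
  fixes a P :: "'n::finite rmat"
  assumes P: "weight_projection F s P" and involution: "a ** a = mat 1" and aP: "a ** P = P ** a"
    and comm: "\<forall>c\<in>F. c ** a = a ** c" and sign: "e = 1 \<or> e = -1" and "a \<notin> F"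
  shows "weight_projection (insert a F) (s(a := e)) (P ** involution_proj a e)"
proof -
  let ?E = "involution_proj a e"
  have "a ** (P ** ?E) = e *\<^sub>R (P ** ?E)"
    using matrix_mul_left_commute[OF aP, of ?E] involution_proj_absorb_left[OF involution sign]
    by (simp add: matrix_mul_scaleR_right)
  moreover have "P ** ?E ** a = e *\<^sub>R (P ** ?E)"
    using involution_proj_absorb_right[OF involution sign]
    by (simp add: matrix_mul_scaleR_right flip: matrix_mul_assoc)
  moreover have "c ** (P ** ?E) = s c *\<^sub>R (P ** ?E)" and "P ** ?E ** c = s c *\<^sub>R (P ** ?E)"
    if "c \<in> F" for c
  proof -
    have "c ** P = s c *\<^sub>R P" and "P ** c = s c *\<^sub>R P"
      using P that unfolding weight_projection_def by auto
    moreover have "?E ** c = c ** ?E"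
      using involution_proj_commute[of c a e] comm that by simp
    ultimately show "c ** (P ** ?E) = s c *\<^sub>R (P ** ?E)" and "P ** ?E ** c = s c *\<^sub>R (P ** ?E)"
      by (simp_all add: matrix_mul_assoc matrix_mul_scaleR_left flip: matrix_mul_assoc[of P])
  qed
  moreover have "P ** ?E *v v = v" if "\<forall>c\<in>insert a F. c *v v = (s(a := e)) c *\<^sub>R v" for v
  proof -
    have "P *v v = v"
      using P that \<open>a \<notin> F\<close> unfolding weight_projection_def by (metis fun_upd_other insertCI)
    moreover have "?E *v v = v"
      using that involution_proj_fixed_vector[OF involution sign] by simp
    ultimately show ?thesis
      by (simp flip: matrix_vector_mul_assoc)
  qed
  ultimately show ?thesis
    using P sign \<open>a \<notin> F\<close> unfolding weight_projection_def by auto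
qed

lemma odd_weight_projection_exists:
  fixes A :: "'n::finite rmat set"
  assumes odd: "odd CARD('n)" and "finite A"
    and comm: "\<And>x y. x \<in> A \<Longrightarrow> y \<in> A \<Longrightarrow> x ** y = y ** x"
    and involution: "\<And>x. x \<in> A \<Longrightarrow> x ** x = mat 1"
  shows "\<exists>P s. odd_projection P \<and> weight_projection A s P"
proof -
  have "\<exists>P s. odd_projection P \<and> (\<forall>b\<in>A. b ** P = P ** b) \<and> weight_projection F s P"
    if "F \<subseteq> A" for F
    using finite_subset[OF that assms(2)] that
  proof (induction F rule: finite_induct)
    case empty
    show ?case
      using odd_projection_mat_1[OF odd] weight_projection_empty by fastforce
  next
    case (insert a F)
    then obtain P s where P: "odd_projection P" "\<forall>b\<in>A. b ** P = P ** b" "weight_projection F s P"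
      by auto
    have aA: "a \<in> A"
      using insert.prems by auto
    obtain e where e: "e = 1 \<or> e = -1" "odd_projection (P ** involution_proj a e)"
      using odd_projection_mult_involution_proj[OF P(1) involution[OF aA]] P(2) aA by blast
    have "b ** involution_proj a e = involution_proj a e ** b" if "b \<in> A" for b
      by (rule involution_proj_commute[OF comm[OF that aA]])
    then have "\<forall>b\<in>A. b ** (P ** involution_proj a e) = P ** involution_proj a e ** b"
      using P(2) matrix_mul_commute_mult by blast
    moreover have "weight_projection (insert a F) (s(a := e)) (P ** involution_proj a e)"
      using weight_projection_insert[OF P(3) involution[OF aA] _ _ e(1) insert.hyps(2)]
        P(2) aA comm insert.prems by auto
    ultimately show ?case
      using e(2) by blast
  qed
  then show ?thesis
    by blast
qed

lemma fixed_vector_twist: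
  fixes T P a :: "'n::finite rmat"
  assumes odd: "odd CARD('n)" and P: "odd_projection P" and TP: "T ** P = P ** T"
    and order_T: "matpow T k = mat 1" "k > 0"
    and aP: "a ** P = - P" and Pa: "P ** a = - P"
    and order_aT: "matpow (a ** T) m = mat 1" "m > 0"
  shows "\<exists>v. v \<noteq> 0 \<and> (T *v v = v \<or> (a ** T) *v v = v)"
proof (rule ccontr)
  assume none: "\<not> ?thesis"
  have PP: "P ** P = P" and det_P: "det (mat 1 - 2 *\<^sub>R P) = -1"
    using P by (simp_all add: odd_projection_def)
  have "a ** T ** P = (a ** P) ** T"
    by (simp add: TP flip: matrix_mul_assoc)
  then have aTP: "a ** T ** P = - (T ** P)"
    by (simp add: aP matrix_mul_uminus_left TP)
  moreover have "P ** (a ** T) = - (T ** P)"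
    by (simp add: matrix_mul_assoc Pa matrix_mul_uminus_left TP)
  ultimately have aT_P: "(a ** T) ** P = P ** (a ** T)"
    by simp
  let ?B = "block_extend P T 1"
  have "det (block_extend P T (-1)) = -1"
    using det_block_extend_no_fixed_vector[OF odd PP TP order_T] none by blast
  moreover have "block_extend P T (-1) = - (?B ** (mat 1 - 2 *\<^sub>R P))"
    using block_extend_mult_reflection[OF PP, of T 1] by simp
  ultimately have "det ?B = -1"
    using det_P det_uminus_odd[OF odd] by (simp add: det_mul)
  moreover have "det (block_extend P (a ** T) (-1)) = -1"
    using det_block_extend_no_fixed_vector[OF odd PP aT_P order_aT] none by blast
  moreover have "block_extend P (a ** T) (-1) = - ?B"
    by (simp add: block_extend_def aTP)
  ultimately show False
    using det_uminus_odd[OF odd] by simp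
qed

section \<open>Conjugation and matrix groups\<close>

definition conj_by :: "'n::finite rmat \<Rightarrow> 'n rmat \<Rightarrow> 'n rmat" where
  "conj_by M X = M ** X ** matrix_inv M"

lemma conj_by_mult:
  "invertible M \<Longrightarrow> conj_by M (X ** Y) = conj_by M X ** conj_by M Y"
  by (simp add: conj_by_def matrix_mul_assoc matrix_mul_inv_cancel(2))

lemma conj_by_mat_1: "invertible M \<Longrightarrow> conj_by M (mat 1) = mat 1"
  by (simp add: conj_by_def matrix_inv_right)

lemma conj_by_involution:
  "invertible M \<Longrightarrow> a ** a = mat 1 \<Longrightarrow> conj_by M a ** conj_by M a = mat 1"
  by (simp add: conj_by_mult[symmetric] conj_by_mat_1)

lemma conj_by_conj_by:
  "invertible A \<Longrightarrow> invertible B \<Longrightarrow> conj_by (A ** B) X = conj_by A (conj_by B X)"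
  by (simp add: conj_by_def matrix_inv_mult matrix_mul_assoc)

lemma conj_by_matrix_inv: "invertible M \<Longrightarrow> conj_by (matrix_inv M) X = matrix_inv M ** X ** M"
  by (simp add: conj_by_def matrix_inv_matrix_inv)

lemma conj_by_mult_right: "invertible M \<Longrightarrow> conj_by M X ** M = M ** X"
  by (simp add: conj_by_def matrix_mul_inv_cancel(2))

lemma conj_by_cancel: "invertible M \<Longrightarrow> matrix_inv M ** conj_by M X ** M = X"
  by (simp add: conj_by_def matrix_mul_assoc matrix_inv_left matrix_mul_inv_cancel(2))

lemma inj_conj_by: "invertible M \<Longrightarrow> inj (conj_by M)"
  by (rule injI) (metis conj_by_cancel)

lemma conj_by_sum: "conj_by M (sum f S) = (\<Sum>x\<in>S. conj_by M (f x))"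
  by (simp add: conj_by_def matrix_mul_sum_left matrix_mul_sum_right)

lemma conj_by_scaleR: "conj_by M (c *\<^sub>R X) = c *\<^sub>R conj_by M X"
  by (simp add: conj_by_def matrix_mul_scaleR_left matrix_mul_scaleR_right)

definition matrix_group :: "'n::finite rmat set \<Rightarrow> bool" where
  "matrix_group S \<longleftrightarrow>
    mat 1 \<in> S \<and> (\<forall>x\<in>S. \<forall>y\<in>S. x ** y \<in> S) \<and> (\<forall>x\<in>S. invertible x \<and> matrix_inv x \<in> S)"

definition matrix_monoid :: "'n::finite rmat set \<Rightarrow> 'n rmat monoid" where
  "matrix_monoid S = \<lparr>carrier = S, mult = (**), one = mat 1\<rparr>"

lemma group_matrix_monoid: "matrix_group S \<Longrightarrow> group (matrix_monoid S)"
  unfolding matrix_group_def matrix_monoid_def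
  by (rule groupI) (auto simp: matrix_mul_assoc, metis matrix_inv_left)

lemma matrix_monoid_inv:
  "matrix_group S \<Longrightarrow> x \<in> S \<Longrightarrow> inv\<^bsub>matrix_monoid S\<^esub> x = matrix_inv x"
  by (rule group.inv_equality[OF group_matrix_monoid])
    (auto simp: matrix_monoid_def matrix_group_def matrix_inv_left)

lemma group_hom_conj_by:
  assumes "matrix_group S" and "invertible M" and "conj_by M ` S = S"
  shows "group_hom (matrix_monoid S) (matrix_monoid S) (conj_by M)"
  using assms group_matrix_monoid
  by (auto simp: group_hom_def group_hom_axioms_def hom_def matrix_monoid_def conj_by_mult)

lemma conj_by_derived_seq:
  assumes "matrix_group S" and "invertible M" and "conj_by M ` S = S"
  shows "conj_by M ` ((derived (matrix_monoid S) ^^ j) S) = (derived (matrix_monoid S) ^^ j) S"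
  using group_hom.exp_of_derived_img[OF group_hom_conj_by[OF assms], of S j] assms(3)
  by (simp add: matrix_monoid_def)

lemma commutator_mem_derived:
  "x \<in> H \<Longrightarrow> y \<in> H \<Longrightarrow> x \<otimes>\<^bsub>G\<^esub> y \<otimes>\<^bsub>G\<^esub> inv\<^bsub>G\<^esub> x \<otimes>\<^bsub>G\<^esub> inv\<^bsub>G\<^esub> y \<in> derived G H"
  unfolding derived_def by (rule generate.incl) blast

section \<open>Weights invariant under conjugation\<close>

context
  fixes A :: "'n::finite rmat set" and s :: "'n rmat \<Rightarrow> real" and P :: "'n rmat"
  assumes finite: "finite A" and one: "mat 1 \<in> A"
    and mult: "\<And>a b. a \<in> A \<Longrightarrow> b \<in> A \<Longrightarrow> a ** b \<in> A"
    and involution: "\<And>a. a \<in> A \<Longrightarrow> a ** a = mat 1"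
    and weight: "weight_projection A s P" and nonzero: "P \<noteq> 0"
begin

lemma weight_mult: "a \<in> A \<Longrightarrow> b \<in> A \<Longrightarrow> s (a ** b) = s a * s b"
proof -
  assume a: "a \<in> A" and b: "b \<in> A"
  have "s (a ** b) *\<^sub>R P = (a ** b) ** P"
    using weight mult[OF a b] unfolding weight_projection_def by simp
  also have "\<dots> = a ** (b ** P)"
    by (simp add: matrix_mul_assoc)
  also have "\<dots> = (s a * s b) *\<^sub>R P"
    using weight a b unfolding weight_projection_def by (simp add: matrix_mul_scaleR_right)
  finally show ?thesis
    using nonzero by simp
qed

lemma weight_sq: "a \<in> A \<Longrightarrow> s a * s a = 1"
  using weight unfolding weight_projection_def by auto

lemma weight_sum_absorb: "a \<in> A \<Longrightarrow> a ** (\<Sum>b\<in>A. s b *\<^sub>R b) = s a *\<^sub>R (\<Sum>b\<in>A. s b *\<^sub>R b)"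
proof -
  assume a: "a \<in> A"
  let ?Q = "\<Sum>b\<in>A. s b *\<^sub>R b"
  have cancel: "a ** (a ** x) = x" for x
    by (simp add: matrix_mul_assoc involution[OF a])
  have inj: "inj_on ((**) a) A"
    by (rule inj_onI) (metis cancel)
  have "(**) a ` A = A"
    by (rule endo_inj_surj[OF finite _ inj]) (use mult a in blast)
  then have "?Q = (\<Sum>b\<in>A. s (a ** b) *\<^sub>R (a ** b))"
    using sum.reindex[OF inj, of "\<lambda>c. s c *\<^sub>R c"] by simp
  also have "\<dots> = s a *\<^sub>R (a ** ?Q)"
    using a by (simp add: weight_mult matrix_mul_sum_right matrix_mul_scaleR_right
        scaleR_sum_right)
  finally have eq: "?Q = s a *\<^sub>R (a ** ?Q)" .
  have "s a *\<^sub>R ?Q = (s a * s a) *\<^sub>R (a ** ?Q)"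
    using arg_cong[OF eq, of "scaleR (s a)"] by (simp only: scaleR_scaleR)
  then show ?thesis
    using weight_sq[OF a] by simp
qed

lemma weight_sum_eq: "(\<Sum>a\<in>A. s a *\<^sub>R a) = real (card A) *\<^sub>R P"
proof -
  let ?Q = "\<Sum>a\<in>A. s a *\<^sub>R a"
  have "P *v (?Q *v v) = ?Q *v v" for v
  proof -
    have "\<forall>a\<in>A. a *v (?Q *v v) = s a *\<^sub>R (?Q *v v)"
      using weight_sum_absorb by (simp add: matrix_vector_mul_assoc matrix_vector_mult_scaleR_left)
    then show ?thesis
      using weight unfolding weight_projection_def by blast
  qed
  then have "P ** ?Q = ?Q"
    by (simp add: matrix_eq matrix_vector_mul_assoc)
  moreover have "P ** ?Q = ?Q ** P"
    using weight unfolding weight_projection_def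
    by (simp add: matrix_mul_sum_left matrix_mul_sum_right matrix_mul_scaleR_left
        matrix_mul_scaleR_right)
  moreover have "?Q ** P = (\<Sum>a\<in>A. P)"
    using weight weight_sq unfolding weight_projection_def
    by (auto simp: matrix_mul_sum_left matrix_mul_scaleR_left intro: sum.cong)
  ultimately show ?thesis
    by (simp add: sum_constant_scaleR del: sum_constant)
qed

context
  fixes T :: "'n rmat"
  assumes invertible: "invertible T" and conj_A: "conj_by T ` A = A"
    and compress: "P ** T ** P \<noteq> 0"
begin

lemma weight_conj_by: "a \<in> A \<Longrightarrow> s (conj_by T a) = s a"
proof -
  assume a: "a \<in> A"
  let ?b = "conj_by T a"
  have b: "?b \<in> A"
    using conj_A a by blast
  have "s a *\<^sub>R (P ** T ** P) = P ** T ** (a ** P)"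
    using weight a unfolding weight_projection_def by (simp add: matrix_mul_scaleR_right)
  also have "\<dots> = P ** (T ** a) ** P"
    by (simp add: matrix_mul_assoc)
  also have "\<dots> = P ** (?b ** T) ** P"
    by (simp only: conj_by_mult_right[OF invertible])
  also have "\<dots> = (P ** ?b) ** T ** P"
    by (simp add: matrix_mul_assoc)
  also have "\<dots> = s ?b *\<^sub>R (P ** T ** P)"
    using weight b unfolding weight_projection_def by (simp add: matrix_mul_scaleR_left)
  finally show ?thesis
    using compress by simp
qed

lemma weight_projection_commute: "T ** P = P ** T"
proof -
  have "conj_by T (\<Sum>a\<in>A. s a *\<^sub>R a) = (\<Sum>a\<in>A. s (conj_by T a) *\<^sub>R conj_by T a)"
    unfolding conj_by_sum conj_by_scaleR by (rule sum.cong) (simp_all add: weight_conj_by)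
  also have "\<dots> = (\<Sum>b\<in>conj_by T ` A. s b *\<^sub>R b)"
    using sum.reindex[OF inj_on_subset[OF inj_conj_by[OF invertible]], of A "\<lambda>b. s b *\<^sub>R b"]
    by simp
  finally have "real (card A) *\<^sub>R conj_by T P = real (card A) *\<^sub>R P"
    using conj_A by (simp add: weight_sum_eq conj_by_scaleR)
  moreover have "card A \<noteq> 0"
    using finite one by auto
  ultimately have "conj_by T P = P"
    by simp
  then show ?thesis
    using conj_by_mult_right[OF invertible, of P] by simp
qed

end

end

section \<open>Solvable groups acting irreducibly in odd dimension\<close>

lemma exists_pow2_times_odd: "k > 0 \<Longrightarrow> \<exists>e q. k = 2 ^ e * q \<and> odd (q::nat)"
proof (induction k rule: less_induct)
  case (less k)
  show ?case
  proof (cases "even k")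
    case True
    then obtain m where m: "k = 2 * m"
      by blast
    then have "m > 0" "m < k"
      using less.prems by auto
    then obtain e q where "m = 2 ^ e * q" "odd q"
      using less.IH by blast
    with m show ?thesis
      by (intro exI[of _ "Suc e"] exI[of _ q]) auto
  next
    case False
    then show ?thesis
      by (intro exI[of _ 0] exI[of _ k]) auto
  qed
qed

locale solvable_odd_irrep =
  fixes G :: "('a, 'b) monoid_scheme" and \<rho> :: "'a \<Rightarrow> 'n::finite rmat"
  assumes group: "group G" and finite_carrier: "finite (carrier G)" and solvable: "solvable G"
    and rep: "real_rep G \<rho>" and irreducible: "irreducible_rep G \<rho>"
    and nontrivial: "nontrivial_rep G \<rho>" and odd_dim: "odd CARD('n)"
begin

sublocale G: group G
  by (rule group)

abbreviation H :: "'n rmat set" where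
  "H \<equiv> \<rho> ` carrier G"

lemma rep_invertible: "g \<in> carrier G \<Longrightarrow> invertible (\<rho> g)"
  using rep unfolding real_rep_def by blast

lemma rep_mult: "g \<in> carrier G \<Longrightarrow> h \<in> carrier G \<Longrightarrow> \<rho> (g \<otimes>\<^bsub>G\<^esub> h) = \<rho> g ** \<rho> h"
  using rep unfolding real_rep_def by blast

lemma rep_one: "\<rho> \<one>\<^bsub>G\<^esub> = mat 1"
proof -
  have "\<rho> \<one>\<^bsub>G\<^esub> ** \<rho> \<one>\<^bsub>G\<^esub> = \<rho> \<one>\<^bsub>G\<^esub>"
    using rep_mult[OF G.one_closed G.one_closed] by simp
  then show ?thesis
    using matrix_mul_inv_cancel(1)[OF rep_invertible[OF G.one_closed], of "\<rho> \<one>\<^bsub>G\<^esub>"]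
      matrix_inv_right[OF rep_invertible[OF G.one_closed]] by simp
qed

lemma rep_inv: "g \<in> carrier G \<Longrightarrow> matrix_inv (\<rho> g) = \<rho> (inv\<^bsub>G\<^esub> g)"
  by (rule matrix_inv_unique) (simp add: rep_mult[symmetric] rep_one)

lemma matrix_group_H: "matrix_group H"
  unfolding matrix_group_def
  by (auto simp: rep_one rep_invertible rep_inv rep_mult[symmetric] intro!: image_eqI)

lemma H_mult: "x \<in> H \<Longrightarrow> y \<in> H \<Longrightarrow> x ** y \<in> H"
  and H_one: "mat 1 \<in> H"
  and H_invertible: "x \<in> H \<Longrightarrow> invertible x"
  and H_matrix_inv: "x \<in> H \<Longrightarrow> matrix_inv x \<in> H"
  using matrix_group_H unfolding matrix_group_def by blast+

lemma finite_H: "finite H"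
  using finite_carrier by simp

lemma group_hom_rep: "group_hom G (matrix_monoid H) \<rho>"
  using group group_matrix_monoid[OF matrix_group_H]
  by (auto simp: group_hom_def group_hom_axioms_def hom_def matrix_monoid_def rep_mult)

lemma solvable_H: "solvable (matrix_monoid H)"
  using group_hom.surj_hom_imp_solvable[OF group_hom_rep] solvable
  by (simp add: matrix_monoid_def)

lemma conj_by_H: "h \<in> H \<Longrightarrow> conj_by h ` H = H"
proof
  assume h: "h \<in> H"
  show "conj_by h ` H \<subseteq> H"
    using h H_mult H_matrix_inv by (auto simp: conj_by_def)
  show "H \<subseteq> conj_by h ` H"
  proof
    fix y
    assume y: "y \<in> H"
    have "conj_by h (conj_by (matrix_inv h) y) = y"
      using conj_by_cancel[OF H_invertible[OF H_matrix_inv[OF h]]]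
      by (simp add: conj_by_matrix_inv H_invertible[OF h] matrix_inv_matrix_inv conj_by_def)
    moreover have "conj_by (matrix_inv h) y \<in> H"
      using h y H_mult H_matrix_inv H_invertible by (simp add: conj_by_matrix_inv)
    ultimately show "y \<in> conj_by h ` H"
      by (metis image_eqI)
  qed
qed

lemma invariant_subspace_cases:
  assumes "subspace W" and "\<And>h w. h \<in> H \<Longrightarrow> w \<in> W \<Longrightarrow> h *v w \<in> W"
  shows "W = {0} \<or> W = UNIV"
proof -
  have "\<forall>g\<in>carrier G. (\<lambda>v. \<rho> g *v v) ` W \<subseteq> W"
    using assms(2) by blast
  then show ?thesis
    using irreducible assms(1) unfolding irreducible_rep_def by blast
qed

text \<open>The common fixed space of X is H-invariant.\<close>
lemma conj_stable_fixed_vector_imp_trivial: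
  assumes conj: "\<And>h x. h \<in> H \<Longrightarrow> x \<in> X \<Longrightarrow> matrix_inv h ** x ** h \<in> X"
    and "v \<noteq> 0" and fixed: "\<forall>x\<in>X. x *v v = v"
  shows "\<forall>x\<in>X. x = mat 1"
proof -
  define W where "W = {w. \<forall>x\<in>X. x *v w = w}"
  have "subspace W"
    unfolding subspace_def W_def by (auto simp: matrix_vector_right_distrib matrix_vector_mult_scaleR)
  moreover have "h *v w \<in> W" if h: "h \<in> H" and w: "w \<in> W" for h w
  proof -
    have "x *v (h *v w) = h *v w" if x: "x \<in> X" for x
    proof -
      have "(matrix_inv h ** x ** h) *v w = w"
        using w conj[OF h x] unfolding W_def by blast
      then have "h *v ((matrix_inv h ** x ** h) *v w) = h *v w"
        by simp
      then have "(h ** matrix_inv h) ** x ** h *v w = h *v w"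
        by (simp add: matrix_vector_mul_assoc matrix_mul_assoc)
      then show ?thesis
        using matrix_inv_right[OF H_invertible[OF h]] by (simp add: matrix_vector_mul_assoc)
    qed
    then show ?thesis
      unfolding W_def by blast
  qed
  ultimately have "W = {0} \<or> W = UNIV"
    by (rule invariant_subspace_cases)
  moreover have "v \<in> W"
    using fixed unfolding W_def by blast
  ultimately have "W = UNIV"
    using \<open>v \<noteq> 0\<close> by blast
  then show ?thesis
    unfolding W_def by (auto simp: matrix_eq)
qed

lemma exists_rep_not_in_kernel:
  assumes "P \<noteq> 0" and "v \<noteq> 0"
  shows "\<exists>h\<in>H. P ** h *v v \<noteq> 0"
proof (rule ccontr)
  assume none: "\<not> (\<exists>h\<in>H. P ** h *v v \<noteq> 0)"
  define W where "W = {u. \<forall>h\<in>H. P ** h *v u = 0}"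
  have "subspace W"
    unfolding subspace_def W_def by (auto simp: matrix_vector_right_distrib matrix_vector_mult_scaleR)
  moreover have "g *v u \<in> W" if g: "g \<in> H" and u: "u \<in> W" for g u
  proof -
    have "P ** h *v (g *v u) = 0" if "h \<in> H" for h
    proof -
      have "P ** (h ** g) *v u = 0"
        using u H_mult[OF that g] unfolding W_def by blast
      then show ?thesis
        by (simp add: matrix_vector_mul_assoc matrix_mul_assoc)
    qed
    then show ?thesis
      unfolding W_def by blast
  qed
  ultimately have "W = {0} \<or> W = UNIV"
    by (rule invariant_subspace_cases)
  moreover have "v \<in> W"
    using none unfolding W_def by blast
  moreover have "W \<noteq> UNIV"
  proof
    assume "W = UNIV"
    then have "P ** mat 1 *v u = 0" for u
      using H_one unfolding W_def by blast
    then show False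
      using assms(1) by (simp add: matrix_eq)
  qed
  ultimately show False
    using assms(2) by blast
qed

lemma finite_order_H: "x \<in> H \<Longrightarrow> \<exists>k>0. matpow x k = mat 1"
  by (rule finite_order_if_closed[OF finite_H H_invertible]) (auto simp: H_mult H_one)

definition derived_length :: nat where
  "derived_length = (LEAST n. (derived (matrix_monoid H) ^^ n) H = {mat 1})"

text \<open>The last nontrivial term D of the derived series of H. It is abelian, and it is
  characteristic in H, hence stable under every matrix normalizing H.\<close>
definition last_derived :: "'n rmat set" where
  "last_derived = (derived (matrix_monoid H) ^^ (derived_length - 1)) H"

lemma derived_length: "(derived (matrix_monoid H) ^^ derived_length) H = {mat 1}"
proof -
  have "\<exists>n. (derived (matrix_monoid H) ^^ n) H = {mat 1}"
    using group.solvable_iff_trivial_derived_seq[OF group_matrix_monoid[OF matrix_group_H]]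
      solvable_H by (simp add: matrix_monoid_def)
  then show ?thesis
    unfolding derived_length_def by (rule LeastI_ex)
qed

lemma derived_length_pos: "derived_length > 0"
proof -
  obtain g where "g \<in> carrier G" "\<rho> g \<noteq> mat 1"
    using nontrivial unfolding nontrivial_rep_def by blast
  then have "H \<noteq> {mat 1}"
    by blast
  then show ?thesis
    using derived_length by (cases derived_length) auto
qed

lemma last_derived_nontrivial: "last_derived \<noteq> {mat 1}"
proof
  assume "last_derived = {mat 1}"
  then have "derived_length \<le> derived_length - 1"
    unfolding derived_length_def last_derived_def by (rule Least_le)
  then show False
    using derived_length_pos by simp
qed

lemma derived_last_derived: "derived (matrix_monoid H) last_derived = {mat 1}"
proof -
  have "derived_length = Suc (derived_length - 1)"
    using derived_length_pos by simp
  then show ?thesis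
    using derived_length unfolding last_derived_def by (metis funpow.simps(2) o_apply)
qed

lemma subgroup_last_derived: "subgroup last_derived (matrix_monoid H)"
  unfolding last_derived_def
  using group.exp_of_derived_is_subgroup[OF group_matrix_monoid[OF matrix_group_H]
      group.subgroup_self[OF group_matrix_monoid[OF matrix_group_H]]]
  by (simp add: matrix_monoid_def)

lemma last_derived_subset: "last_derived \<subseteq> H"
  and last_derived_mult: "x \<in> last_derived \<Longrightarrow> y \<in> last_derived \<Longrightarrow> x ** y \<in> last_derived"
  and last_derived_one: "mat 1 \<in> last_derived"
  using subgroup.subset[OF subgroup_last_derived] subgroup.m_closed[OF subgroup_last_derived]
    subgroup.one_closed[OF subgroup_last_derived]
  by (simp_all add: matrix_monoid_def)

lemma finite_last_derived: "finite last_derived"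
  using finite_subset[OF last_derived_subset finite_H] .

lemma last_derived_commute:
  assumes x: "x \<in> last_derived" and y: "y \<in> last_derived"
  shows "x ** y = y ** x"
proof -
  have H: "x \<in> H" "y \<in> H"
    using x y last_derived_subset by auto
  have "x ** y ** matrix_inv x ** matrix_inv y \<in> derived (matrix_monoid H) last_derived"
    using commutator_mem_derived[OF x y, of "matrix_monoid H"]
    by (simp add: matrix_monoid_inv[OF matrix_group_H] H) (simp add: matrix_monoid_def)
  then have "x ** y ** matrix_inv x ** matrix_inv y = mat 1"
    using derived_last_derived by simp
  then show ?thesis
    by (rule commute_if_commutator_eq_1[OF H_invertible[OF H(1)] H_invertible[OF H(2)]])
qed

lemma conj_by_last_derived:
  "invertible M \<Longrightarrow> conj_by M ` H = H \<Longrightarrow> conj_by M ` last_derived = last_derived"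
  unfolding last_derived_def by (rule conj_by_derived_seq[OF matrix_group_H])

lemma matrix_inv_conj_last_derived:
  assumes "h \<in> H" and "x \<in> last_derived"
  shows "matrix_inv h ** x ** h \<in> last_derived"
proof -
  have "invertible (matrix_inv h)"
    using assms(1) by (simp add: H_invertible H_matrix_inv)
  with conj_by_H[OF H_matrix_inv[OF assms(1)]] have "conj_by (matrix_inv h) x \<in> last_derived"
    using conj_by_last_derived assms(2) by blast
  then show ?thesis
    using assms(1) by (simp add: conj_by_matrix_inv H_invertible)
qed

definition involutions :: "'n rmat set" where
  "involutions = {x \<in> last_derived. x ** x = mat 1}"

lemma involutions_subset: "involutions \<subseteq> H"
  and finite_involutions: "finite involutions"
  and involutions_one: "mat 1 \<in> involutions"
  and involutions_involution: "a \<in> involutions \<Longrightarrow> a ** a = mat 1"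
  and involutions_commute: "a \<in> involutions \<Longrightarrow> b \<in> involutions \<Longrightarrow> a ** b = b ** a"
  unfolding involutions_def
  using last_derived_subset finite_last_derived last_derived_one last_derived_commute
  by (auto intro: finite_subset)

lemma involutions_mult: "a \<in> involutions \<Longrightarrow> b \<in> involutions \<Longrightarrow> a ** b \<in> involutions"
proof -
  assume a: "a \<in> involutions" and b: "b \<in> involutions"
  have "a ** b ** (a ** b) = a ** (b ** a) ** b"
    by (simp add: matrix_mul_assoc)
  also have "\<dots> = a ** a ** (b ** b)"
    by (simp add: involutions_commute[OF b a] matrix_mul_assoc)
  finally have "a ** b ** (a ** b) = mat 1"
    using involutions_involution a b by simp
  then show ?thesis
    using a b last_derived_mult unfolding involutions_def by blast
qed

lemma conj_by_involutions:
  assumes M: "invertible M" and "conj_by M ` H = H"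
  shows "conj_by M ` involutions = involutions"
proof (rule endo_inj_surj[OF finite_involutions])
  show "conj_by M ` involutions \<subseteq> involutions"
    using conj_by_last_derived[OF assms] conj_by_involution[OF M]
    unfolding involutions_def by blast
  show "inj_on (conj_by M) involutions"
    using inj_conj_by[OF M] by (rule inj_on_subset) simp
qed

lemma matrix_inv_conj_involutions:
  assumes h: "h \<in> H" and a: "a \<in> involutions"
  shows "matrix_inv h ** a ** h \<in> involutions"
proof -
  have "conj_by (matrix_inv h) a ** conj_by (matrix_inv h) a = mat 1"
    using a h by (intro conj_by_involution) (simp_all add: involutions_def H_invertible H_matrix_inv)
  then show ?thesis
    using a matrix_inv_conj_last_derived[OF h] h
    by (simp add: involutions_def conj_by_matrix_inv H_invertible)
qed

text \<open>Were all elements of the abelian group D of odd order, they would have a common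
  nonzero fixed vector, which irreducibility rules out.\<close>
lemma involutions_nontrivial: "\<exists>a\<in>involutions. a \<noteq> mat 1"
proof (rule ccontr)
  assume "\<not> ?thesis"
  then have no_involution: "y = mat 1" if "y \<in> last_derived" "y ** y = mat 1" for y
    using that unfolding involutions_def by blast
  have matpow_last_derived: "matpow y j \<in> last_derived" if "y \<in> last_derived" for y j
    using that by (induction j) (auto simp: matpow_Suc last_derived_one last_derived_mult)
  have two_power: "y = mat 1" if "y \<in> last_derived" "matpow y (2 ^ e) = mat 1" for e y
    using that
  proof (induction e arbitrary: y)
    case 0
    then show ?case by (simp add: matpow_Suc)
  next
    case (Suc e)
    have "matpow (matpow y 2) (2 ^ e) = mat 1"
      using Suc.prems(2) by (simp add: matpow_mult[symmetric])
    then have "matpow y 2 = mat 1"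
      using Suc.IH matpow_last_derived Suc.prems(1) by blast
    then show ?case
      using no_involution[OF Suc.prems(1)] by (simp add: numeral_2_eq_2 matpow_Suc)
  qed
  have "\<exists>q. odd q \<and> matpow x q = mat 1" if x: "x \<in> last_derived" for x
  proof -
    obtain k where k: "k > 0" "matpow x k = mat 1"
      using finite_order_H x last_derived_subset by blast
    obtain e q where eq: "k = 2 ^ e * q" "odd q"
      using exists_pow2_times_odd[OF k(1)] by blast
    have "matpow (matpow x q) (2 ^ e) = mat 1"
      using k(2) eq(1) by (simp add: matpow_mult[symmetric] mult.commute)
    then show ?thesis
      using two_power matpow_last_derived x eq(2) by blast
  qed
  then obtain v where "v \<noteq> 0" "\<forall>x\<in>last_derived. x *v v = v"
    using common_fixed_vector_odd_order[OF odd_dim finite_last_derived last_derived_commute] by blast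
  then have "\<forall>x\<in>last_derived. x = mat 1"
    using conj_stable_fixed_vector_imp_trivial[OF matrix_inv_conj_last_derived] by blast
  then show False
    using last_derived_nontrivial last_derived_one by blast
qed

lemma weight_nontrivial:
  assumes P: "odd_projection P" and weight: "weight_projection involutions s P"
  shows "\<exists>a\<in>involutions. s a = -1"
proof (rule ccontr)
  assume "\<not> ?thesis"
  then have "\<forall>a\<in>involutions. s a = 1"
    using weight unfolding weight_projection_def by auto
  moreover obtain w where w: "P *v w \<noteq> 0"
    using odd_projection_nonzero[OF P] by blast
  ultimately have "\<forall>a\<in>involutions. a *v (P *v w) = P *v w"
    using weight unfolding weight_projection_def by (simp add: matrix_vector_mul_assoc)
  then have "\<forall>a\<in>involutions. a = mat 1"
    using conj_stable_fixed_vector_imp_trivial[OF matrix_inv_conj_involutions w] by blast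
  then show False
    using involutions_nontrivial by blast
qed

context
  fixes N :: "'n rmat"
  assumes N: "finite_order_normalizing G \<rho> N"
begin

lemma N_invertible: "invertible N"
  and conj_by_N: "conj_by N ` H = H"
  and finite_order_N: "\<exists>k>0. matpow N k = mat 1"
  using N unfolding finite_order_normalizing_def conj_by_def[abs_def] matpow_def by blast+

lemma conj_by_rep_mult_N:
  assumes "h \<in> H"
  shows "conj_by (h ** N) ` H = H"
proof -
  have "conj_by (h ** N) ` H = conj_by h ` conj_by N ` H"
    by (simp add: conj_by_conj_by[OF H_invertible[OF assms] N_invertible] image_image)
  then show ?thesis
    by (simp add: conj_by_N conj_by_H[OF assms])
qed

lemma finite_order_rep_mult_N:
  assumes h: "h \<in> H"
  shows "\<exists>k>0. matpow (h ** N) k = mat 1"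
proof -
  obtain kN where "matpow N kN = mat 1" "kN > 0"
    using finite_order_N by blast
  then have finite_powers: "finite (range (matpow N))"
    by (rule finite_range_matpow)
  define S where "S = (\<lambda>(x, y). x ** y) ` (H \<times> range (matpow N))"
  show ?thesis
  proof (rule finite_order_if_closed)
    show "finite S"
      unfolding S_def using finite_H finite_powers by simp
    show "invertible (h ** N)"
      using H_invertible[OF h] N_invertible by (rule invertible_mult)
    have "mat 1 \<in> range (matpow N)"
      by (metis matpow_0 rangeI)
    then have "(mat 1, mat 1) \<in> H \<times> range (matpow N)"
      using H_one by simp
    then show "mat 1 \<in> S"
      unfolding S_def by (rule image_eqI[rotated]) simp
    fix X
    assume "X \<in> S"
    then obtain x j where x: "x \<in> H" and X: "X = x ** matpow N j"
      unfolding S_def by auto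
    have "h ** N ** X = h ** (N ** x) ** matpow N j"
      unfolding X by (simp add: matrix_mul_assoc)
    also have "\<dots> = h ** (conj_by N x ** N) ** matpow N j"
      by (simp only: conj_by_mult_right[OF N_invertible])
    also have "\<dots> = (h ** conj_by N x) ** matpow N (Suc j)"
      by (simp add: matpow_Suc matrix_mul_assoc)
    finally have "h ** N ** X = (h ** conj_by N x) ** matpow N (Suc j)" .
    moreover have "h ** conj_by N x \<in> H"
      using H_mult[OF h] conj_by_N x by blast
    ultimately show "h ** N ** X \<in> S"
      unfolding S_def by (auto intro!: image_eqI[where x="(h ** conj_by N x, matpow N (Suc j))"])
  qed
qed

lemma exists_rep_mult_N_compression:
  assumes "P \<noteq> 0"
  shows "\<exists>h\<in>H. P ** (h ** N) ** P \<noteq> 0"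
proof -
  obtain w where w: "P *v w \<noteq> 0"
    using assms by (auto simp: matrix_eq)
  then have "N *v (P *v w) \<noteq> 0"
    using injD[OF inj_matrix_vector_mult[OF N_invertible], of "P *v w" 0] by auto
  then obtain h where h: "h \<in> H" "P ** h *v (N *v (P *v w)) \<noteq> 0"
    using exists_rep_not_in_kernel[OF assms] by blast
  moreover have "P ** h *v (N *v (P *v w)) = (P ** (h ** N) ** P) *v w"
    by (simp add: matrix_vector_mul_assoc matrix_mul_assoc)
  ultimately have "P ** (h ** N) ** P \<noteq> 0"
    by auto
  with h(1) show ?thesis
    by blast
qed

lemma E1_triple_if_normalizing: "E1_triple G \<rho> N"
proof -
  obtain P s where P: "odd_projection P" and weight: "weight_projection involutions s P"
    using odd_weight_projection_exists[OF odd_dim finite_involutions involutions_commute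
        involutions_involution] by blast
  have "P \<noteq> 0"
    using odd_projection_nonzero[OF P] by auto
  obtain a where a: "a \<in> involutions" "s a = -1"
    using weight_nontrivial[OF P weight] by blast
  obtain h where h: "h \<in> H" "P ** (h ** N) ** P \<noteq> 0"
    using exists_rep_mult_N_compression[OF \<open>P \<noteq> 0\<close>] by blast
  let ?T = "h ** N"
  have invertible_T: "invertible ?T"
    using H_invertible[OF h(1)] N_invertible by (rule invertible_mult)
  have TP: "?T ** P = P ** ?T"
    using weight_projection_commute[OF finite_involutions involutions_one involutions_mult
        involutions_involution weight \<open>P \<noteq> 0\<close> invertible_T
        conj_by_involutions[OF invertible_T conj_by_rep_mult_N[OF h(1)]]] h(2)
    by (simp add: matrix_mul_assoc)
  have aP: "a ** P = - P" "P ** a = - P"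
    using weight a unfolding weight_projection_def by auto
  have ah: "a ** h \<in> H"
    using a involutions_subset H_mult h(1) by blast
  obtain k where k: "k > 0" "matpow ?T k = mat 1"
    using finite_order_rep_mult_N[OF h(1)] by blast
  obtain m where m: "m > 0" "matpow (a ** ?T) m = mat 1"
    using finite_order_rep_mult_N[OF ah] by (auto simp: matrix_mul_assoc)
  obtain v where v: "v \<noteq> 0" "?T *v v = v \<or> (a ** ?T) *v v = v"
    using fixed_vector_twist[OF odd_dim P TP k(2,1) aP m(2,1)] by blast
  moreover have "a ** ?T = (a ** h) ** N"
    by (simp add: matrix_mul_assoc)
  ultimately obtain x where "x \<in> H" "(x ** N) *v v = v"
    using h(1) ah by auto
  with v(1) show ?thesis
    unfolding E1_triple_def by blast
qed

end

end

theorem corollary3: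
  fixes G :: "('a, 'b) monoid_scheme" and \<rho> :: "'a \<Rightarrow> real^'n^'n"
  assumes "group G" and "finite (carrier G)" and "solvable G"
    and "real_rep G \<rho>" and "irreducible_rep G \<rho>" and "nontrivial_rep G \<rho>"
    and "odd CARD('n)"
  shows "E1_pair G \<rho>"
proof -
  interpret solvable_odd_irrep G \<rho>
    using assms by (simp add: solvable_odd_irrep_def)
  show ?thesis
    unfolding E1_pair_def using E1_triple_if_normalizing by blast
qed

end
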